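(* Let $\mathbf{v}_1,\dots,\mathbf{v}_n\in\mathbb{R}^d$, not all zero, let $V=[\mathbf{v}_1,\dots,\mathbf{v}_n]\in\mathbb{R}^{d\times n}$ and $A=V^TV$. Let $0<\epsilon\le1$ and let $\underline{N}^{\epsilon}$ be the least dimension of a linear subspace $S\subseteq\mathbb{R}^d$ such that $\frac{\sum_{i=1}^n\|\mathbf{v}_i-P_S\mathbf{v}_i\|_2^2}{\sum_{i=1}^n\|\mathbf{v}_i\|_2^2}\le\epsilon^2$, where $P_S$ is the orthogonal projection onto $S$. Then $$\underline{N}^{\epsilon}\ge\frac{\left(\sum_{i=1}^n\|\mathbf{v}_i\|_2^2\right)^2(1-\epsilon^2)^2}{\sum_{i,j=1}^n(\mathbf{v}_i\cdot\mathbf{v}_j)^2}=\frac{\operatorname{tr}(A)^2(1-\epsilon^2)^2}{\|A\|_F^2}.$$ *)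

theory Defs
  imports "HOL-Analysis.Analysis"
begin

definition orth_proj :: "'a::euclidean_space set \<Rightarrow> 'a \<Rightarrow> 'a" where
  "orth_proj S x = (THE p. p \<in> S \<and> (\<forall>y\<in>S. inner (x - p) y = 0))"

definition min_dim_eps :: "real \<Rightarrow> nat \<Rightarrow> (nat \<Rightarrow> 'a::euclidean_space) \<Rightarrow> nat" where
  "min_dim_eps eps n v = (LEAST k. \<exists>S. subspace S \<and> dim S = k \<and>
      (\<Sum>i<n. (norm (v i - orth_proj S (v i)))^2) / (\<Sum>i<n. (norm (v i))^2) \<le> eps^2)"

end

theory Submission
  imports Defs
begin

text \<open>Let S be an optimal subspace, k = dim S, with orthonormal basis B. The total
  residual is tr A - Q with Q = (sum over i and w in B of (w . v_i)^2), so Q is at least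
  (1 - eps^2) tr A. On the other hand Q is the Frobenius inner product of the projection matrix
  P = (sum over w in B of w w^T) with the matrix (sum over i of v_i v_i^T), whose Frobenius norm
  is that of A; since the squared Frobenius norm of P is k, Cauchy-Schwarz gives
  Q^2 <= k |A|_F^2.\<close>

definition outer :: "real^'m \<Rightarrow> real^'n \<Rightarrow> real^'n^'m" where
  "outer x y = (\<chi> a. \<chi> b. x$a * y$b)"

lemma inner_outer: "inner (outer a b) (outer c d) = inner a c * inner b d"
  unfolding outer_def inner_vec_def
  by (simp add: sum_product sum_distrib_left mult_ac)

lemma orth_proj_unique:
  assumes "subspace S" and "p \<in> S" and "\<forall>y\<in>S. inner (x - p) y = 0"
  shows "orth_proj S x = p"
  unfolding orth_proj_def
proof (rule the_equality)
  show "p \<in> S \<and> (\<forall>y\<in>S. inner (x - p) y = 0)" using assms(2,3) by blast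
next
  fix q assume q: "q \<in> S \<and> (\<forall>y\<in>S. inner (x - q) y = 0)"
  have "q - p \<in> S" using q assms(1,2) by (simp add: subspace_diff)
  hence "inner (x - p) (q - p) = 0" "inner (x - q) (q - p) = 0" using assms(3) q by auto
  hence "inner (q - p) (q - p) = 0" by (simp add: inner_diff_left inner_diff_right)
  thus "q = p" by simp
qed

lemma orth_proj_UNIV: "orth_proj UNIV x = x"
  by (rule orth_proj_unique) auto

locale orthonormal_set =
  fixes B :: "'a::euclidean_space set"
  assumes finite: "finite B"
    and pairwise_orthogonal: "pairwise orthogonal B"
    and norm_one: "\<And>u. u \<in> B \<Longrightarrow> norm u = 1"
begin

lemma inner_eq: "u \<in> B \<Longrightarrow> w \<in> B \<Longrightarrow> inner u w = (if u = w then 1 else 0)"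
  using pairwise_orthogonal norm_one by (auto simp: pairwise_def orthogonal_def norm_eq_1)

lemma residual_orthogonal:
  assumes "u \<in> B"
  shows "inner (x - (\<Sum>w\<in>B. inner w x *\<^sub>R w)) u = 0"
proof -
  have "(\<Sum>w\<in>B. inner w x * inner w u) = inner u x"
    using assms finite by (simp add: inner_eq if_distrib sum.delta' cong: if_cong)
  thus ?thesis by (simp add: inner_diff_left inner_sum_left) (simp add: inner_commute)
qed

lemma orth_proj_span: "orth_proj (span B) x = (\<Sum>w\<in>B. inner w x *\<^sub>R w)"
proof (rule orth_proj_unique)
  show "(\<Sum>w\<in>B. inner w x *\<^sub>R w) \<in> span B"
    by (simp add: span_base span_scale span_sum)
  have "orthogonal (x - (\<Sum>w\<in>B. inner w x *\<^sub>R w)) u" if "u \<in> B" for u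
    using residual_orthogonal[OF that] by (simp add: orthogonal_def)
  then show "\<forall>y\<in>span B. inner (x - (\<Sum>w\<in>B. inner w x *\<^sub>R w)) y = 0"
    using orthogonal_to_span unfolding orthogonal_def by blast
qed simp

lemma norm_diff_orth_proj_span:
  "(norm (x - orth_proj (span B) x))^2 = (norm x)^2 - (\<Sum>w\<in>B. (inner w x)^2)"
proof -
  define p where "p = (\<Sum>w\<in>B. inner w x *\<^sub>R w)"
  have "inner (x - p) p = (\<Sum>w\<in>B. inner w x * inner (x - p) w)"
    unfolding p_def by (simp add: inner_sum_right)
  also have "\<dots> = 0"
    using residual_orthogonal by (simp add: p_def)
  finally have "inner (x - p) p = 0" .
  moreover have "inner p x = (\<Sum>w\<in>B. (inner w x)^2)"
    unfolding p_def by (simp add: inner_sum_left power2_eq_square)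
  ultimately have "(norm (x - p))^2 = (norm x)^2 - (\<Sum>w\<in>B. (inner w x)^2)"
    by (simp add: power2_norm_eq_inner inner_diff_left inner_diff_right inner_commute)
  thus ?thesis by (simp add: orth_proj_span p_def)
qed

end

lemma norm_sum_outer_self_orthonormal:
  fixes B :: "(real^'n) set"
  assumes "orthonormal_set B"
  shows "(norm (\<Sum>w\<in>B. outer w w))^2 = real (card B)"
proof -
  have "(norm (\<Sum>w\<in>B. outer w w))^2 = (\<Sum>u\<in>B. \<Sum>w\<in>B. (inner w u)^2)"
    unfolding power2_norm_eq_inner
    by (simp add: inner_sum_left inner_sum_right inner_outer power2_eq_square)
  also have "\<dots> = (\<Sum>u\<in>B. \<Sum>w\<in>B. if w = u then 1 else 0)"
    using orthonormal_set.inner_eq[OF assms] by (intro sum.cong refl) simp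
  also have "\<dots> = (\<Sum>u\<in>B. 1)"
    using orthonormal_set.finite[OF assms] by simp
  finally show ?thesis by simp
qed

lemma captured_energy_sq_le:
  fixes v :: "nat \<Rightarrow> real^'d"
  assumes "orthonormal_set B"
  shows "(\<Sum>i<n. \<Sum>w\<in>B. (inner w (v i))^2)^2
    \<le> real (card B) * (\<Sum>i<n. \<Sum>j<n. (inner (v i) (v j))^2)"
proof -
  define P where "P = (\<Sum>w\<in>B. outer w w)"
  define G where "G = (\<Sum>i<n. outer (v i) (v i))"
  have "inner P G = (\<Sum>i<n. \<Sum>w\<in>B. (inner w (v i))^2)"
    unfolding P_def G_def
    by (simp add: inner_sum_left inner_sum_right inner_outer power2_eq_square sum.swap[of _ B])
  moreover have "(norm G)^2 = (\<Sum>i<n. \<Sum>j<n. (inner (v i) (v j))^2)"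
    unfolding G_def power2_norm_eq_inner
    by (simp add: inner_sum_left inner_sum_right inner_outer power2_eq_square, subst sum.swap, simp)
  moreover have "(norm P)^2 = real (card B)"
    unfolding P_def using norm_sum_outer_self_orthonormal[OF assms] .
  moreover have "(inner P G)^2 \<le> (norm P)^2 * (norm G)^2"
    using Cauchy_Schwarz_ineq[of P G] by (simp add: power2_norm_eq_inner)
  ultimately show ?thesis by simp
qed

lemma min_dim_eps_attained:
  fixes v :: "nat \<Rightarrow> 'a::euclidean_space"
  obtains S where "subspace S" "dim S = min_dim_eps eps n v"
    "(\<Sum>i<n. (norm (v i - orth_proj S (v i)))^2) / (\<Sum>i<n. (norm (v i))^2) \<le> eps^2"
proof -
  let ?P = "\<lambda>k. \<exists>S. subspace S \<and> dim S = k \<and>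
      (\<Sum>i<n. (norm (v i - orth_proj S (v i)))^2) / (\<Sum>i<n. (norm (v i))^2) \<le> eps^2"
  have "?P (dim (UNIV :: 'a set))"
    by (rule exI[of _ UNIV]) (simp add: orth_proj_UNIV)
  hence "?P (min_dim_eps eps n v)" unfolding min_dim_eps_def by (rule LeastI)
  with that show ?thesis by blast
qed

lemma sum_inner_sq_pos:
  fixes v :: "nat \<Rightarrow> 'a::real_inner"
  assumes "i0 < n" "v i0 \<noteq> 0"
  shows "0 < (\<Sum>i<n. \<Sum>j<n. (inner (v i) (v j))^2)"
proof -
  have "0 < (\<Sum>i<n. (inner (v i) (v i))^2)"
    using assms by (intro sum_pos2[of "{..<n}" i0]) auto
  also have "\<dots> \<le> (\<Sum>i<n. \<Sum>j<n. (inner (v i) (v j))^2)"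
    by (intro sum_mono member_le_sum) auto
  finally show ?thesis .
qed

theorem mainTheorem5:
  fixes n :: nat and v :: "nat \<Rightarrow> real ^ 'd" and eps :: real
  assumes "\<exists>i<n. v i \<noteq> 0"
    and "0 < eps" and "eps \<le> 1"
  shows "real (min_dim_eps eps n v) \<ge>
    (\<Sum>i<n. (norm (v i))^2)^2 * (1 - eps^2)^2 / (\<Sum>i<n. \<Sum>j<n. (inner (v i) (v j))^2)"
proof -
  define T where "T = (\<Sum>i<n. (norm (v i))^2)"
  define F where "F = (\<Sum>i<n. \<Sum>j<n. (inner (v i) (v j))^2)"
  obtain i0 where "i0 < n" "v i0 \<noteq> 0" using assms(1) by blast
  hence "0 < T" "0 < F"
    unfolding T_def F_def by (auto intro!: sum_pos2[of "{..<n}" i0] sum_inner_sq_pos)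
  obtain S where S: "subspace S" "dim S = min_dim_eps eps n v"
    "(\<Sum>i<n. (norm (v i - orth_proj S (v i)))^2) / T \<le> eps^2"
    using min_dim_eps_attained unfolding T_def by blast
  obtain B where B: "pairwise orthogonal B" "\<And>x. x \<in> B \<Longrightarrow> norm x = 1"
    "independent B" "card B = dim S" "span B = S"
    using orthonormal_basis_subspace[OF S(1)] by blast
  interpret orthonormal_set B
    using B(1-3) independent_bound by unfold_locales blast+
  define Q where "Q = (\<Sum>i<n. \<Sum>w\<in>B. (inner w (v i))^2)"
  have "T - Q \<le> eps^2 * T"
    using S(3) \<open>0 < T\<close> norm_diff_orth_proj_span B(5)
    by (simp add: T_def Q_def sum_subtractf divide_le_eq)
  hence "((1 - eps^2) * T)^2 \<le> Q^2"
    using assms(2,3) \<open>0 < T\<close> by (intro power_mono) (auto simp: algebra_simps power_le_one)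
  also have "\<dots> \<le> real (min_dim_eps eps n v) * F"
    using captured_energy_sq_le[OF orthonormal_set_axioms] B(4) S(2) by (simp add: Q_def F_def)
  finally show ?thesis
    using \<open>0 < F\<close> by (simp add: T_def F_def pos_divide_le_eq power_mult_distrib mult_ac)
qed

end
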